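(* A function $\phi:\mathbb{F}_2^n\to\mathbb{C}$ satisfies $\|\phi\|_2=\|\phi\|_{U^3}=1$ (i.e. $\phi$ is a stabilizer state) if and only if there exists a Lagrangian subspace $L\le\mathbb{F}_2^{2n}$ such that for all $a,b\in\mathbb{F}_2^n$, $$\big|\widehat{\Delta_a\phi}(b)\big|=\begin{cases}1 & \text{if }(a,b)\in L,\\ 0&\text{if }(a,b)\notin L.\end{cases}$$
   Context: For $g:\mathbb{F}_2^n\to\mathbb{C}$: $\|g\|_2=(\mathbb{E}_{x\in\mathbb{F}_2^n}|g(x)|^2)^{1/2}$; $\Delta_a g(x)=g(x+a)\overline{g(x)}$; $\hat g(b)=\mathbb{E}_{x\in\mathbb{F}_2^n}g(x)(-1)^{b\cdot x}$; $\|g\|_{U^3}=\big(\mathbb{E}_{x,a,b,c}\Delta_a\Delta_b\Delta_c g(x)\big)^{1/8}$. The standard symplectic form on $\mathbb{F}_2^{2n}=\mathbb{F}_2^n\times\mathbb{F}_2^n$ is $[(a,b),(c,d)]=a\cdot d-b\cdot c$. A subspace $U$ is isotropic if $[u,v]=0$ for all $u,v\in U$; a Lagrangian subspace is a maximal isotropic subspace (equivalently an isotropic subspace of dimension $n$). *)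

theory Defs
  imports Complex_Main
begin

text \<open>The vector space F_2^n is modelled as the type of functions 'n \<Rightarrow> bool
  for a finite index type 'n (so n = CARD('n)); addition is pointwise xor.\<close>

type_synonym 'n vec2 = "'n \<Rightarrow> bool"

definition vadd :: "'n vec2 \<Rightarrow> 'n vec2 \<Rightarrow> 'n vec2" where
  "vadd x y = (\<lambda>i. x i \<noteq> y i)"

definition vzero :: "'n vec2" where
  "vzero = (\<lambda>i. False)"

text \<open>Dot product a \<cdot> x in F_2 (True = 1).\<close>
definition dot2 :: "('n::finite) vec2 \<Rightarrow> 'n vec2 \<Rightarrow> bool" where
  "dot2 a x = odd (card {i. a i \<and> x i})"

definition chr :: "('n::finite) vec2 \<Rightarrow> 'n vec2 \<Rightarrow> complex" where
  "chr b x = (if dot2 b x then -1 else 1)"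

definition expect :: "(('n::finite) vec2 \<Rightarrow> 'a::real_normed_field) \<Rightarrow> 'a" where
  "expect f = (\<Sum>x\<in>UNIV. f x) / of_nat (card (UNIV :: 'n vec2 set))"

definition norm2 :: "(('n::finite) vec2 \<Rightarrow> complex) \<Rightarrow> real" where
  "norm2 g = sqrt (expect (\<lambda>x. (cmod (g x))\<^sup>2))"

definition Delta :: "('n::finite) vec2 \<Rightarrow> ('n vec2 \<Rightarrow> complex) \<Rightarrow> 'n vec2 \<Rightarrow> complex" where
  "Delta a g x = g (vadd x a) * cnj (g x)"

definition fourier :: "(('n::finite) vec2 \<Rightarrow> complex) \<Rightarrow> 'n vec2 \<Rightarrow> complex" where
  "fourier g b = expect (\<lambda>x. g x * chr b x)"

text \<open>The U^3 norm. The average below is always a nonnegative real number;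
  we take its real part and the 8th root.\<close>
definition U3norm :: "(('n::finite) vec2 \<Rightarrow> complex) \<Rightarrow> real" where
  "U3norm g = (Re (expect (\<lambda>x. expect (\<lambda>a. expect (\<lambda>b. expect (\<lambda>c.
       Delta a (Delta b (Delta c g)) x)))))) powr (1/8)"

text \<open>Standard symplectic form on F_2^{2n} = F_2^n \<times> F_2^n:
  [(a,b),(c,d)] = a\<cdot>d - b\<cdot>c (in F_2, subtraction is xor).\<close>
definition sympl :: "('n::finite) vec2 \<times> 'n vec2 \<Rightarrow> 'n vec2 \<times> 'n vec2 \<Rightarrow> bool" where
  "sympl u v = (dot2 (fst u) (snd v) \<noteq> dot2 (snd u) (fst v))"

definition subspace2 :: "(('n::finite) vec2 \<times> 'n vec2) set \<Rightarrow> bool" where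
  "subspace2 U = ((vzero, vzero) \<in> U \<and>
     (\<forall>u\<in>U. \<forall>v\<in>U. (vadd (fst u) (fst v), vadd (snd u) (snd v)) \<in> U))"

definition isotropic :: "(('n::finite) vec2 \<times> 'n vec2) set \<Rightarrow> bool" where
  "isotropic U = (subspace2 U \<and> (\<forall>u\<in>U. \<forall>v\<in>U. \<not> sympl u v))"

definition lagrangian :: "(('n::finite) vec2 \<times> 'n vec2) set \<Rightarrow> bool" where
  "lagrangian L = (isotropic L \<and> (\<forall>M. isotropic M \<and> L \<subseteq> M \<longrightarrow> M = L))"

end

theory Submission
  imports Defs "HOL-Library.Cardinality"
begin

text \<open>
  Put P(a,b) = |(Delta_a phi)^(b)|^2, a function on F_2^2n. The Wiener-Khinchin identity
  E_x Delta_c h(x) = sum_b |h^(b)|^2 (-1)^(b.c), applied twice and combined with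
  Delta_a Delta_c = Delta_c Delta_a, shows that P is invariant under the symplectic Fourier
  transform: sum_u P(u) (-1)^[u,v] = 2^n P(v). Moreover P is bounded by P(0,0) = ||phi||_2^4,
  and ||phi||_U3^8 = 2^-n sum_u P(u)^2.

  If ||phi||_2 = ||phi||_U3 = 1, then 0 <= P <= 1 and sum P^2 = sum P = 2^n, so P is the
  indicator of a set L of size 2^n. The invariance then says that v lies in L exactly when v is
  symplectically orthogonal to all of L; a set equal to its own symplectic complement is a
  Lagrangian subspace. Conversely, for the indicator of a Lagrangian L both norm identities
  follow from 0 in L and sum P^2 = sum P = 2^n P(0,0).
\<close>

section \<open>The group F_2^n and its characters\<close>

lemma vadd_commute: "vadd x y = vadd y x"
  by (auto simp: vadd_def)

lemma vadd_assoc: "vadd (vadd x y) z = vadd x (vadd y z)"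
  by (auto simp: vadd_def)

lemma vadd_left_commute: "vadd x (vadd y z) = vadd y (vadd x z)"
  by (auto simp: vadd_def)

lemmas vadd_ac = vadd_commute vadd_assoc vadd_left_commute

lemma vadd_self [simp]: "vadd x x = vzero"
  by (simp add: vadd_def vzero_def)

lemma vadd_vzero [simp]: "vadd x vzero = x" "vadd vzero x = x"
  by (simp_all add: vadd_def vzero_def)

lemma vadd_eq_vzero_iff: "vadd x y = vzero \<longleftrightarrow> x = y"
  by (auto simp: vadd_def vzero_def fun_eq_iff)

lemma sum_vadd_translate:
  fixes f :: "('n::finite) vec2 \<Rightarrow> 'a::comm_monoid_add"
  shows "(\<Sum>x\<in>UNIV. f (vadd x a)) = (\<Sum>x\<in>UNIV. f x)"
  by (rule sum.reindex_bij_witness[where i="\<lambda>x. vadd x a" and j="\<lambda>x. vadd x a"])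
     (auto simp: vadd_ac)

lemma dot2_commute: "dot2 a x = dot2 x a"
  by (simp add: dot2_def conj_commute)

lemma dot2_vadd: "dot2 b (vadd x y) = (dot2 b x \<noteq> dot2 b y)"
proof -
  define A B where "A = {i. b i \<and> x i}" and "B = {i. b i \<and> y i}"
  have "card A + card B = card {i. b i \<and> vadd x y i} + 2 * card (A \<inter> B)"
  proof -
    have "{i. b i \<and> vadd x y i} = (A \<union> B) - (A \<inter> B)"
      by (auto simp: A_def B_def vadd_def)
    moreover have "A \<inter> B \<subseteq> A \<union> B"
      by blast
    ultimately show ?thesis
      using card_Un_Int[of A B] card_Diff_subset[of "A \<inter> B" "A \<union> B"]
        card_mono[of "A \<union> B" "A \<inter> B"]
      by simp
  qed
  then show ?thesis
    unfolding dot2_def A_def[symmetric] B_def[symmetric] by (metis even_add even_mult_iff even_numeral)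
qed

lemma dot2_vzero [simp]: "dot2 vzero x = False" "dot2 x vzero = False"
  by (simp_all add: dot2_def vzero_def)

lemma chr_vadd: "chr b (vadd x y) = chr b x * chr b y"
  by (simp add: chr_def dot2_vadd)

lemma chr_commute: "chr b x = chr x b"
  by (simp add: chr_def dot2_commute)

lemma chr_vadd_left: "chr (vadd a b) x = chr a x * chr b x"
  by (simp add: chr_commute[of _ x] chr_vadd)

lemma chr_vzero [simp]: "chr vzero x = 1" "chr x vzero = 1"
  by (simp_all add: chr_def)

lemma cnj_chr [simp]: "cnj (chr b x) = chr b x"
  by (simp add: chr_def)

lemma norm_chr [simp]: "cmod (chr b x) = 1"
  by (simp add: chr_def)

lemma sum_chr:
  "(\<Sum>b\<in>UNIV. chr b (x::('n::finite) vec2)) = (if x = vzero then of_nat (CARD('n vec2)) else 0)"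
proof (cases "x = vzero")
  case False
  then obtain i where "x i"
    by (auto simp: vzero_def)
  define e :: "'n vec2" where "e = (\<lambda>j. j = i)"
  have "{j. e j \<and> x j} = {i}"
    using \<open>x i\<close> by (auto simp: e_def)
  then have "chr e x = -1"
    by (simp add: chr_def dot2_def)
  have "(\<Sum>b\<in>UNIV. chr b x) = (\<Sum>b\<in>UNIV. chr (vadd b e) x)"
    by (rule sum_vadd_translate[symmetric])
  also have "\<dots> = - (\<Sum>b\<in>UNIV. chr b x)"
    by (simp add: chr_vadd_left \<open>chr e x = -1\<close> sum_negf)
  finally show ?thesis
    using False by simp
qed simp

lemma sum_chr_mult_chr:
  "(\<Sum>b\<in>UNIV. chr b x * chr b y) = (if x = y then of_nat (CARD('n vec2)) else 0)"
  for x y :: "('n::finite) vec2"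
  by (simp add: chr_vadd[symmetric] sum_chr vadd_eq_vzero_iff)

lemma expect_cong: "(\<And>x. f x = g x) \<Longrightarrow> expect f = expect g"
  by (simp add: expect_def)

lemma expect_sum:
  "expect (\<lambda>x. \<Sum>i\<in>I. f i x) = (\<Sum>i\<in>I. expect (f i))"
  by (simp add: expect_def sum.swap[of _ I] sum_divide_distrib)

lemma expect_mult_left: "expect (\<lambda>x. c * f x) = c * expect f"
  by (simp add: expect_def sum_distrib_left)

lemma expect_swap: "expect (\<lambda>x. expect (\<lambda>y. f x y)) = expect (\<lambda>y. expect (\<lambda>x. f x y))"
  unfolding expect_def sum_divide_distrib[symmetric] by (subst sum.swap) (simp add: field_simps)

lemma expect_of_real: "expect (\<lambda>x. of_real (f x)) = (of_real (expect f) :: 'a::real_normed_field)"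
  by (simp add: expect_def)

lemma cnj_expect: "cnj (expect f) = expect (\<lambda>x. cnj (f x))"
  by (simp add: expect_def cnj_sum)

lemma expect_vadd_translate: "expect (\<lambda>x. f (vadd x a)) = expect f"
  by (simp add: expect_def sum_vadd_translate)

lemma expect_mono: "(\<And>x. f x \<le> g x) \<Longrightarrow> expect f \<le> (expect g :: real)"
  unfolding expect_def by (intro divide_right_mono sum_mono) auto

lemma norm_expect_le: "norm (expect f) \<le> expect (\<lambda>x. norm (f x))"
  unfolding expect_def by (simp add: norm_divide divide_right_mono norm_sum)

lemma expect_chr_mult_chr: "expect (\<lambda>x. chr x a * chr x b) = (if a = b then 1 else 0)"
  by (simp add: expect_def sum_chr_mult_chr)

lemma sum_UNIV_pair:
  "(\<Sum>u\<in>UNIV. f u) = (\<Sum>a\<in>UNIV. \<Sum>b\<in>UNIV. f (a, b))"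
  by (simp add: sum.cartesian_product)

section \<open>Fourier analysis of derivatives\<close>

lemma plancherel:
  fixes f g :: "('n::finite) vec2 \<Rightarrow> complex"
  shows "(\<Sum>b\<in>UNIV. fourier f b * cnj (fourier g b)) = expect (\<lambda>x. f x * cnj (g x))"
proof -
  define N :: complex where "N = of_nat (CARD('n vec2))"
  have "fourier f b * cnj (fourier g b) =
      (\<Sum>x\<in>UNIV. \<Sum>y\<in>UNIV. f x * cnj (g y) * (chr b x * chr b y)) / N\<^sup>2" for b
    unfolding fourier_def expect_def by (simp add: N_def cnj_sum sum_product power2_eq_square mult_ac)
  then have "(\<Sum>b\<in>UNIV. fourier f b * cnj (fourier g b)) =
      (\<Sum>b\<in>UNIV. \<Sum>x\<in>UNIV. \<Sum>y\<in>UNIV. f x * cnj (g y) * (chr b x * chr b y)) / N\<^sup>2"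
    by (simp add: sum_divide_distrib)
  also have "\<dots> = (\<Sum>x\<in>UNIV. \<Sum>b\<in>UNIV. \<Sum>y\<in>UNIV. f x * cnj (g y) * (chr b x * chr b y)) / N\<^sup>2"
    by (subst sum.swap) (rule refl)
  also have "\<dots> = (\<Sum>x\<in>UNIV. \<Sum>y\<in>UNIV. f x * cnj (g y) * (\<Sum>b\<in>UNIV. chr b x * chr b y)) / N\<^sup>2"
    by (rule arg_cong[where f="\<lambda>t. t / _"], rule sum.cong[OF refl], subst sum.swap)
      (simp add: sum_distrib_left)
  also have "\<dots> = (\<Sum>x\<in>UNIV. f x * cnj (g x) * N) / N\<^sup>2"
    by (simp add: sum_chr_mult_chr N_def if_distrib[of "\<lambda>t. _ * t"] cong: if_cong)
  also have "\<dots> = expect (\<lambda>x. f x * cnj (g x))"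
    by (simp add: expect_def N_def power2_eq_square sum_distrib_right[symmetric])
  finally show ?thesis .
qed

lemma fourier_vadd_translate: "fourier (\<lambda>x. h (vadd x c)) b = chr b c * fourier h b"
proof -
  have "fourier (\<lambda>x. h (vadd x c)) b = expect (\<lambda>x. h (vadd (vadd x c) c) * chr b (vadd x c))"
    unfolding fourier_def by (rule expect_vadd_translate[symmetric])
  also have "\<dots> = chr b c * fourier h b"
    by (simp add: fourier_def vadd_assoc chr_vadd mult_ac expect_mult_left[symmetric])
  finally show ?thesis .
qed

lemma expect_Delta_eq_sum_fourier:
  "expect (Delta c h) = (\<Sum>b\<in>UNIV. of_real ((cmod (fourier h b))\<^sup>2) * chr c b)"
proof -
  have "expect (Delta c h) = (\<Sum>b\<in>UNIV. fourier (\<lambda>x. h (vadd x c)) b * cnj (fourier h b))"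
    by (simp add: plancherel Delta_def[abs_def])
  also have "\<dots> = (\<Sum>b\<in>UNIV. of_real ((cmod (fourier h b))\<^sup>2) * chr c b)"
    by (rule sum.cong)
      (simp_all add: fourier_vadd_translate complex_norm_square chr_commute[of c] del: of_real_power)
  finally show ?thesis .
qed

lemma sum_chr_mult_expect_Delta:
  fixes g :: "('n::finite) vec2 \<Rightarrow> complex"
  shows "(\<Sum>a\<in>UNIV. chr a d * expect (Delta a g)) =
    of_nat (CARD('n vec2)) * of_real ((cmod (fourier g d))\<^sup>2)"
proof -
  have "(\<Sum>a\<in>UNIV. chr a d * expect (Delta a g)) =
      (\<Sum>a\<in>UNIV. \<Sum>b\<in>UNIV. of_real ((cmod (fourier g b))\<^sup>2) * (chr a d * chr a b))"
    by (simp add: expect_Delta_eq_sum_fourier sum_distrib_left mult_ac)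
  also have "\<dots> = (\<Sum>b\<in>UNIV. of_real ((cmod (fourier g b))\<^sup>2) * (\<Sum>a\<in>UNIV. chr a d * chr a b))"
    by (subst sum.swap) (simp add: sum_distrib_left)
  finally show ?thesis
    by (simp add: sum_chr_mult_chr if_distrib[of "\<lambda>t. _ * t"] cong: if_cong)
qed

lemma Delta_commute: "Delta a (Delta b h) = Delta b (Delta a h)"
  by (simp add: Delta_def fun_eq_iff vadd_assoc vadd_commute[of a b] mult_ac)

lemma expect_expect_Delta: "expect (\<lambda>b. expect (Delta b g)) = of_real ((cmod (expect g))\<^sup>2)"
proof -
  have "expect (\<lambda>b. expect (Delta b g)) = expect (\<lambda>x. expect (\<lambda>b. g (vadd b x)) * cnj (g x))"
    by (subst expect_swap) (simp add: Delta_def expect_mult_left vadd_commute mult.commute)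
  also have "\<dots> = expect g * cnj (expect g)"
    by (simp add: expect_vadd_translate expect_mult_left cnj_expect mult.commute)
  finally show ?thesis
    by (simp only: complex_norm_square)
qed

lemma expect_Delta_Delta_eq_sum_fourier_pow4:
  "expect (\<lambda>b. expect (\<lambda>c. expect (Delta b (Delta c h)))) =
    (\<Sum>b\<in>UNIV. of_real ((cmod (fourier h b)) ^ 4))"
proof -
  define P :: "_ \<Rightarrow> complex" where "P b = of_real ((cmod (fourier h b))\<^sup>2)" for b
  have "expect (\<lambda>b. expect (\<lambda>c. expect (Delta b (Delta c h)))) =
      expect (\<lambda>c. (\<Sum>b\<in>UNIV. P b * chr c b) * cnj (\<Sum>b'\<in>UNIV. P b' * chr c b'))"
    by (subst expect_swap, simp only: expect_expect_Delta)
      (simp add: expect_Delta_eq_sum_fourier complex_norm_square P_def del: of_real_power)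
  also have "\<dots> = expect (\<lambda>c. \<Sum>b\<in>UNIV. \<Sum>b'\<in>UNIV. P b * P b' * (chr c b * chr c b'))"
    by (simp add: P_def cnj_sum sum_product mult_ac)
  also have "\<dots> = (\<Sum>b\<in>UNIV. \<Sum>b'\<in>UNIV. P b * P b' * expect (\<lambda>c. chr c b * chr c b'))"
    by (simp add: expect_sum expect_mult_left)
  also have "\<dots> = (\<Sum>b\<in>UNIV. P b * P b)"
    by (simp add: expect_chr_mult_chr if_distrib[of "\<lambda>t. _ * t"] cong: if_cong)
  finally show ?thesis
    by (simp add: P_def power2_eq_square[symmetric] power_mult[symmetric])
qed

lemma U3norm_eq:
  "U3norm \<phi> = expect (\<lambda>a. \<Sum>b\<in>UNIV. (cmod (fourier (Delta a \<phi>) b)) ^ 4) powr (1/8)"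
proof -
  have reorder: "expect (\<lambda>x. expect (\<lambda>b. expect (\<lambda>c. Delta a (Delta b (Delta c \<phi>)) x))) =
      expect (\<lambda>b. expect (\<lambda>c. expect (Delta b (Delta c (Delta a \<phi>)))))" for a
  proof -
    have "expect (\<lambda>x. expect (\<lambda>b. expect (\<lambda>c. Delta a (Delta b (Delta c \<phi>)) x))) =
        expect (\<lambda>b. expect (\<lambda>x. expect (\<lambda>c. Delta a (Delta b (Delta c \<phi>)) x)))"
      by (rule expect_swap)
    also have "\<dots> = expect (\<lambda>b. expect (\<lambda>c. expect (Delta a (Delta b (Delta c \<phi>)))))"
      by (rule expect_cong, rule expect_swap)
    finally show ?thesis
      by (simp add: Delta_commute[of a])
  qed
  have "expect (\<lambda>x. expect (\<lambda>a. expect (\<lambda>b. expect (\<lambda>c. Delta a (Delta b (Delta c \<phi>)) x)))) =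
      of_real (expect (\<lambda>a. \<Sum>b\<in>UNIV. (cmod (fourier (Delta a \<phi>) b)) ^ 4))"
    by (subst expect_swap)
      (simp add: reorder expect_Delta_Delta_eq_sum_fourier_pow4 expect_of_real[symmetric])
  then show ?thesis
    by (simp add: U3norm_def)
qed

lemma norm2_nonneg: "0 \<le> norm2 \<phi>"
  by (simp add: norm2_def expect_def sum_nonneg)

lemma norm2_power2: "(norm2 \<phi>)\<^sup>2 = expect (\<lambda>x. (cmod (\<phi> x))\<^sup>2)"
  by (simp add: norm2_def expect_def sum_nonneg)

lemma norm_fourier_Delta_le: "cmod (fourier (Delta a \<phi>) b) \<le> (norm2 \<phi>)\<^sup>2"
proof -
  have "cmod (fourier (Delta a \<phi>) b) \<le> expect (\<lambda>x. cmod (\<phi> (vadd x a)) * cmod (\<phi> x))"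
    using norm_expect_le[of "\<lambda>x. Delta a \<phi> x * chr b x"]
    by (simp add: fourier_def Delta_def norm_mult)
  also have "\<dots> \<le> expect (\<lambda>x. ((cmod (\<phi> (vadd x a)))\<^sup>2 + (cmod (\<phi> x))\<^sup>2) / 2)"
  proof (rule expect_mono)
    fix x
    show "cmod (\<phi> (vadd x a)) * cmod (\<phi> x) \<le> ((cmod (\<phi> (vadd x a)))\<^sup>2 + (cmod (\<phi> x))\<^sup>2) / 2"
      using sum_squares_bound[of "cmod (\<phi> (vadd x a))" "cmod (\<phi> x)"] by simp
  qed
  also have "\<dots> = (norm2 \<phi>)\<^sup>2"
    by (simp add: norm2_power2 expect_def sum.distrib sum_divide_distrib[symmetric]
        sum_vadd_translate[of "\<lambda>x. (cmod (\<phi> x))\<^sup>2"])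
  finally show ?thesis .
qed

lemma norm_fourier_Delta_vzero: "cmod (fourier (Delta vzero \<phi>) vzero) = (norm2 \<phi>)\<^sup>2"
proof -
  have "fourier (Delta vzero \<phi>) vzero = of_real ((norm2 \<phi>)\<^sup>2)"
    by (simp add: norm2_power2 fourier_def Delta_def complex_norm_square expect_of_real[symmetric]
        del: of_real_power)
  then show ?thesis
    by (simp add: norm_power)
qed

section \<open>Self-dual sets are Lagrangian\<close>

definition sympl_sign :: "('n::finite) vec2 \<times> 'n vec2 \<Rightarrow> 'n vec2 \<times> 'n vec2 \<Rightarrow> real" where
  "sympl_sign u v = (if sympl u v then -1 else 1)"

lemma sympl_vadd_right:
  "sympl w (vadd (fst u) (fst v), vadd (snd u) (snd v)) = (sympl w u \<noteq> sympl w v)"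
  by (auto simp: sympl_def dot2_vadd)

lemma sympl_vzero_right [simp]: "\<not> sympl u (vzero, vzero)"
  by (simp add: sympl_def)

lemma lagrangian_if_eq_symplectic_complement:
  assumes L: "\<And>v. v \<in> L \<longleftrightarrow> (\<forall>u\<in>L. \<not> sympl u v)"
  shows "lagrangian L"
proof -
  have "(vzero, vzero) \<in> L"
    using L[of "(vzero, vzero)"] by simp
  moreover have "(vadd (fst u) (fst v), vadd (snd u) (snd v)) \<in> L" if "u \<in> L" "v \<in> L" for u v
    using L[of u] L[of v] L[of "(vadd (fst u) (fst v), vadd (snd u) (snd v))"] that
    by (auto simp: sympl_vadd_right)
  moreover have "\<not> sympl u v" if "u \<in> L" "v \<in> L" for u v
    using L[of v] that by blast
  ultimately have "isotropic L"
    by (simp add: isotropic_def subspace2_def)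
  moreover have "M = L" if "isotropic M" "L \<subseteq> M" for M
  proof -
    have "v \<in> L" if "v \<in> M" for v
      using L[of v] \<open>isotropic M\<close> \<open>L \<subseteq> M\<close> \<open>v \<in> M\<close> by (auto simp: isotropic_def)
    then show ?thesis
      using \<open>L \<subseteq> M\<close> by blast
  qed
  ultimately show ?thesis
    by (simp add: lagrangian_def)
qed

lemma sum_sympl_sign_eq_card_iff:
  assumes "finite S"
  shows "(\<Sum>u\<in>S. sympl_sign u v) = real (card S) \<longleftrightarrow> (\<forall>u\<in>S. \<not> sympl u v)"
proof -
  have "(\<Sum>u\<in>S. sympl_sign u v) = real (card S) \<longleftrightarrow> (\<Sum>u\<in>S. 1 - sympl_sign u v) = 0"
    by (auto simp: sum_subtractf)
  also have "\<dots> \<longleftrightarrow> (\<forall>u\<in>S. 1 - sympl_sign u v = 0)"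
    using assms by (intro sum_nonneg_eq_0_iff) (auto simp: sympl_sign_def)
  finally show ?thesis
    by (simp add: sympl_sign_def)
qed

lemma zero_one_if_sum_power2_eq_sum:
  fixes f :: "'a \<Rightarrow> real"
  assumes "finite A" and bounds: "\<And>u. u \<in> A \<Longrightarrow> 0 \<le> f u \<and> f u \<le> 1"
    and "(\<Sum>u\<in>A. (f u)\<^sup>2) = (\<Sum>u\<in>A. f u)" and "u \<in> A"
  shows "f u = 0 \<or> f u = 1"
proof -
  have "(\<Sum>u\<in>A. f u - (f u)\<^sup>2) = 0"
    using assms(3) by (simp add: sum_subtractf)
  moreover have "\<forall>u\<in>A. 0 \<le> f u - (f u)\<^sup>2"
    using bounds by (simp add: power2_eq_square mult_left_le)
  ultimately have "f u - (f u)\<^sup>2 = 0"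
    using sum_nonneg_eq_0_iff[OF \<open>finite A\<close>, of "\<lambda>u. f u - (f u)\<^sup>2"] \<open>u \<in> A\<close> by simp
  then have "f u * (1 - f u) = 0"
    by (simp add: power2_eq_square algebra_simps)
  then show ?thesis
    by simp
qed

lemma indicator_of_lagrangian_iff:
  fixes P :: "('n::finite) vec2 \<times> 'n vec2 \<Rightarrow> real"
  assumes invariant: "\<And>v. (\<Sum>u\<in>UNIV. P u * sympl_sign u v) = real CARD('n vec2) * P v"
    and nonneg: "\<And>u. 0 \<le> P u" and bounded: "\<And>u. P u \<le> P (vzero, vzero)"
  shows "(P (vzero, vzero) = 1 \<and> (\<Sum>u\<in>UNIV. (P u)\<^sup>2) = real CARD('n vec2)) \<longleftrightarrow>
    (\<exists>L. lagrangian L \<and> (\<forall>u. P u = (if u \<in> L then 1 else 0)))"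
proof -
  define N where "N = real CARD('n vec2)"
  have sum_P: "(\<Sum>u\<in>UNIV. P u) = N * P (vzero, vzero)"
    using invariant[of "(vzero, vzero)"] by (simp add: sympl_sign_def N_def)
  show ?thesis
  proof
    assume "P (vzero, vzero) = 1 \<and> (\<Sum>u\<in>UNIV. (P u)\<^sup>2) = real CARD('n vec2)"
    then have P0: "P (vzero, vzero) = 1" and sum_P2: "(\<Sum>u\<in>UNIV. (P u)\<^sup>2) = (\<Sum>u\<in>UNIV. P u)"
      using sum_P by (auto simp: N_def)
    define L where "L = {u. P u = 1}"
    have P_L: "P u = (if u \<in> L then 1 else 0)" for u
      using zero_one_if_sum_power2_eq_sum[of UNIV P u] nonneg bounded P0 sum_P2 by (auto simp: L_def)
    have sum_L: "(\<Sum>u\<in>UNIV. P u * f u) = (\<Sum>u\<in>L. f u)" for f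
      by (simp add: P_L if_distrib[of "\<lambda>t. t * _"] sum.If_cases cong: if_cong)
    have card_L: "real (card L) = N"
      using sum_L[of "\<lambda>_. 1"] sum_P P0 by simp
    have "v \<in> L \<longleftrightarrow> (\<forall>u\<in>L. \<not> sympl u v)" for v
    proof -
      have "(\<Sum>u\<in>L. sympl_sign u v) = real (card L) * P v"
        using invariant[of v] sum_L card_L by (simp add: N_def)
      moreover have "N > 0"
        by (simp add: N_def)
      ultimately show ?thesis
        using sum_sympl_sign_eq_card_iff[of L v] card_L P_L[of v] by (auto split: if_splits)
    qed
    then have "lagrangian L"
      by (rule lagrangian_if_eq_symplectic_complement)
    then show "\<exists>L. lagrangian L \<and> (\<forall>u. P u = (if u \<in> L then 1 else 0))"
      using P_L by blast
  next
    assume "\<exists>L. lagrangian L \<and> (\<forall>u. P u = (if u \<in> L then 1 else 0))"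
    then obtain L where "lagrangian L" and P_L: "\<And>u. P u = (if u \<in> L then 1 else 0)"
      by blast
    then have P0: "P (vzero, vzero) = 1"
      by (simp add: lagrangian_def isotropic_def subspace2_def)
    have "(\<Sum>u\<in>UNIV. (P u)\<^sup>2) = (\<Sum>u\<in>UNIV. P u)"
      by (intro sum.cong) (simp_all add: P_L)
    then show "P (vzero, vzero) = 1 \<and> (\<Sum>u\<in>UNIV. (P u)\<^sup>2) = real CARD('n vec2)"
      using P0 sum_P by (simp add: N_def)
  qed
qed

section \<open>Stabilizer states\<close>

definition delta_spectrum :: "(('n::finite) vec2 \<Rightarrow> complex) \<Rightarrow> 'n vec2 \<times> 'n vec2 \<Rightarrow> real" where
  "delta_spectrum \<phi> u = (cmod (fourier (Delta (fst u) \<phi>) (snd u)))\<^sup>2"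

lemma delta_spectrum_nonneg: "0 \<le> delta_spectrum \<phi> u"
  by (simp add: delta_spectrum_def)

lemma delta_spectrum_vzero: "delta_spectrum \<phi> (vzero, vzero) = (norm2 \<phi>) ^ 4"
  by (simp add: delta_spectrum_def norm_fourier_Delta_vzero)

lemma delta_spectrum_le: "delta_spectrum \<phi> u \<le> (norm2 \<phi>) ^ 4"
  using power_mono[OF norm_fourier_Delta_le norm_ge_zero, where n=2]
  by (simp add: delta_spectrum_def flip: power_mult)

lemma chr_mult_chr_eq_sympl_sign: "chr a d * chr c b = of_real (sympl_sign (a, b) (c, d))"
  by (simp add: chr_def sympl_sign_def sympl_def dot2_commute)

lemma sum_delta_spectrum_sympl_sign:
  fixes \<phi> :: "('n::finite) vec2 \<Rightarrow> complex"
  shows "(\<Sum>u\<in>UNIV. delta_spectrum \<phi> u * sympl_sign u v) = real CARD('n vec2) * delta_spectrum \<phi> v"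
proof -
  obtain c d where v: "v = (c, d)"
    by fastforce
  have "of_real (\<Sum>u\<in>UNIV. delta_spectrum \<phi> u * sympl_sign u v) =
      (\<Sum>a\<in>UNIV. \<Sum>b\<in>UNIV. of_real ((cmod (fourier (Delta a \<phi>) b))\<^sup>2) * (chr a d * chr c b))"
    by (simp add: sum_UNIV_pair[of "\<lambda>u. _ u * _ u"] v delta_spectrum_def chr_mult_chr_eq_sympl_sign
        del: of_real_power)
  also have "\<dots> = (\<Sum>a\<in>UNIV. chr a d * expect (Delta c (Delta a \<phi>)))"
    by (simp add: expect_Delta_eq_sum_fourier sum_distrib_left mult_ac del: of_real_power)
  \<comment> \<open>Delta_c Delta_a = Delta_a Delta_c exchanges the roles of (a, b) and (c, d).\<close>
  also have "\<dots> = (\<Sum>a\<in>UNIV. chr a d * expect (Delta a (Delta c \<phi>)))"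
    by (simp add: Delta_commute[of c])
  also have "\<dots> = of_real (real CARD('n vec2) * delta_spectrum \<phi> v)"
    by (simp add: sum_chr_mult_expect_Delta v delta_spectrum_def del: of_real_power)
  finally show ?thesis
    using of_real_eq_iff by blast
qed

lemma U3norm_eq_delta_spectrum:
  fixes \<phi> :: "('n::finite) vec2 \<Rightarrow> complex"
  shows "U3norm \<phi> = ((\<Sum>u\<in>UNIV. (delta_spectrum \<phi> u)\<^sup>2) / real CARD('n vec2)) powr (1/8)"
  unfolding sum_UNIV_pair[of "\<lambda>u. (delta_spectrum \<phi> u)\<^sup>2"]
  by (simp add: U3norm_eq expect_def delta_spectrum_def flip: power_mult)

lemma powr_eq_one_iff_base: "0 \<le> x \<Longrightarrow> e \<noteq> 0 \<Longrightarrow> x powr e = 1 \<longleftrightarrow> x = (1::real)"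
  by (auto simp: powr_def)

theorem proposition2p4:
  fixes \<phi> :: "('n::finite) vec2 \<Rightarrow> complex"
  shows "(norm2 \<phi> = 1 \<and> U3norm \<phi> = 1) \<longleftrightarrow>
    (\<exists>L. lagrangian L \<and>
       (\<forall>a b. cmod (fourier (Delta a \<phi>) b) = (if (a, b) \<in> L then 1 else 0)))"
proof -
  have norm2_iff: "norm2 \<phi> = 1 \<longleftrightarrow> delta_spectrum \<phi> (vzero, vzero) = 1"
    using power_eq_iff_eq_base[of 4 "norm2 \<phi>" 1] norm2_nonneg[of \<phi>]
    by (auto simp: delta_spectrum_vzero)
  have U3norm_iff: "U3norm \<phi> = 1 \<longleftrightarrow> (\<Sum>u\<in>UNIV. (delta_spectrum \<phi> u)\<^sup>2) = real CARD('n vec2)"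
    by (auto simp: U3norm_eq_delta_spectrum powr_eq_one_iff_base sum_nonneg)
  have indicator_iff: "cmod (fourier (Delta a \<phi>) b) = (if (a, b) \<in> L then 1 else 0) \<longleftrightarrow>
      delta_spectrum \<phi> (a, b) = (if (a, b) \<in> L then 1 else 0)" for a b L
    by (simp add: delta_spectrum_def abs_square_eq_1)
  have "(norm2 \<phi> = 1 \<and> U3norm \<phi> = 1) \<longleftrightarrow>
      (\<exists>L. lagrangian L \<and> (\<forall>u. delta_spectrum \<phi> u = (if u \<in> L then 1 else 0)))"
    unfolding norm2_iff U3norm_iff
    by (rule indicator_of_lagrangian_iff)
      (simp_all add: sum_delta_spectrum_sympl_sign delta_spectrum_nonneg delta_spectrum_le
        delta_spectrum_vzero)
  then show ?thesis
    by (simp add: indicator_iff)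
qed

end
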